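(* Let $(P,e)$, $P\in\mathcal{T}_k$, be a friendly tree pattern, let $\sigma(P,e)=(\tau(P),C)$ be its associated mesh pattern, let $i$ be the position of the largest value $k$ in $\tau(P)$, and let $\sigma^-(P,e)=(\tau(P),C\setminus\{(i-1,k)\})$. Then the mesh pattern $\sigma^-(P,e)$ is tame.
   Context: Binary trees: $\mathcal{T}_k$ is the set of binary trees on $k$ vertices labeled $1,\dots,k$ by the search tree property (left-subtree vertices of $i$ smaller, right-subtree vertices larger). $c_L(i),c_R(i),p(i)$: left child, right child, parent ($\varepsilon$ if nonexistent); $r(P)$ the root; $P(i)$ the subtree rooted at $i$; $L(i),R(i)$ the subtrees rooted at $c_L(i),c_R(i)$. $B_R(i)=\{i,c_R(i),c_R^2(i),\dots\}$ is the vertex set of the right branch starting at $i$; $B_R^-(i)$ is $B_R(i)$ minus its last vertex. A tree pattern is $(P,e)$ with $e\colon[k]\setminus\{r(P)\}\to\{0,1\}$. The preorder permutation is $\tau(\varepsilon)=$ empty, $\tau(P)=(r(P),\tau(L(P)),\tau(R(P)))$. $(P,e)$ is friendly if: (i) $p(k)\neq\varepsilon$ and $c_L(k)\neq\varepsilon$; (ii) $e(j)=0$ for all $j\in B_R^-(r(P))\setminus\{r(P)\}$; (iii) if $e(k)=1$ then $e(c_L(k))=0$. Mesh patterns: a mesh pattern is $(\tau,C)$, $\tau\in S_k$, $C\subseteq\{0,\dots,k\}^2$. With $G(\pi)=\{(j,\pi(j))\}$, $\pi\in S_n$ contains $(\tau,C)$ if there are indices $\nu_1<\dots<\nu_k$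 with $\pi(\nu_1),\dots,\pi(\nu_k)$ order-isomorphic to $\tau$ and, for $\lambda_1<\dots<\lambda_k$ these values sorted and $\nu_0=\lambda_0=0$, $\nu_{k+1}=\lambda_{k+1}=n+1$, $G(\pi)\cap((\nu_a,\nu_{a+1})\times(\lambda_b,\lambda_{b+1}))=\emptyset$ for all $(a,b)\in C$. $S_n(\sigma)$ denotes the permutations of $[n]$ avoiding $\sigma$. $\sigma(P,e)$: with $\rho=\tau(P)^{-1}$, $C_j=\{(\rho(j)-1,m):m\in B_R^-(j)\}$ for $j\in[k]$, and for non-root $j$, $C_j'=\emptyset$ if $e(j)=0$, $C_j'=\{(\rho(j)-1,\min P(j)-1),(\rho(j)-1,\max P(j))\}$ if $e(j)=1$; $\sigma(P,e)=(\tau(P),\bigcup_j C_j\cup\bigcup_j C_j')$. Tameness: for $\pi\in S_{n-1}$ and $1\le j\le n$, $c_j(\pi)\in S_n$ inserts the value $n$ at position $j$; for $\pi\in S_n$, $p(\pi)\in S_{n-1}$ removes the value $n$. $L_n\subseteq S_n$ is a zigzag language if either $n=0$ and $L_0=\{\varepsilon\}$, or $n\ge1$, $L_{n-1}:=\{p(\pi):\pi\in L_n\}$ is a zigzag language, and $c_1(\pi),c_n(\pi)\in L_n$ for all $\pi\in L_{n-1}$. A sequence $L_0,L_1,\dots$ is hereditary if $L_{n-1}=p(L_n)$ for all $n\ge1$. A pattern $\sigma$ is tame if $S_n(\sigma)$, $n\ge0$, is a hereditary sequence of zigzag languages. *)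

theory Defs
  imports "HOL-Library.Tree"
begin

text \<open>T_k: binary trees on k vertices labelled 1..k by the search tree property,
  i.e. the in-order reading of the labels is 1,2,...,k.\<close>
definition trees :: "nat \<Rightarrow> nat tree set" where
  "trees k = {P. inorder P = [1..<k+1]}"

fun root_opt :: "nat tree \<Rightarrow> nat option" where
  "root_opt Leaf = None"
| "root_opt (Node l a r) = Some a"

fun subtree_at :: "nat tree \<Rightarrow> nat \<Rightarrow> nat tree" where
  "subtree_at Leaf i = Leaf"
| "subtree_at (Node l a r) i =
     (if i = a then Node l a r else if i < a then subtree_at l i else subtree_at r i)"

fun lsub :: "nat tree \<Rightarrow> nat tree" where
  "lsub Leaf = Leaf" | "lsub (Node l a r) = l"
fun rsub :: "nat tree \<Rightarrow> nat tree" where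
  "rsub Leaf = Leaf" | "rsub (Node l a r) = r"

text \<open>Left child, right child (None plays the role of epsilon).\<close>
definition cL :: "nat tree \<Rightarrow> nat \<Rightarrow> nat option" where
  "cL P i = root_opt (lsub (subtree_at P i))"
definition cR :: "nat tree \<Rightarrow> nat \<Rightarrow> nat option" where
  "cR P i = root_opt (rsub (subtree_at P i))"

fun parent :: "nat tree \<Rightarrow> nat \<Rightarrow> nat option" where
  "parent Leaf i = None"
| "parent (Node l a r) i =
     (if root_opt l = Some i \<or> root_opt r = Some i then Some a
      else if i < a then parent l i else parent r i)"

definition root :: "nat tree \<Rightarrow> nat" where
  "root P = the (root_opt P)"

fun rspine :: "nat tree \<Rightarrow> nat list" where
  "rspine Leaf = []"
| "rspine (Node l a r) = a # rspine r"

definition BR :: "nat tree \<Rightarrow> nat \<Rightarrow> nat set" where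
  "BR P i = set (rspine (subtree_at P i))"
definition BRm :: "nat tree \<Rightarrow> nat \<Rightarrow> nat set" where
  "BRm P i = set (butlast (rspine (subtree_at P i)))"

definition minP :: "nat tree \<Rightarrow> nat \<Rightarrow> nat" where
  "minP P i = Min (set_tree (subtree_at P i))"
definition maxP :: "nat tree \<Rightarrow> nat \<Rightarrow> nat" where
  "maxP P i = Max (set_tree (subtree_at P i))"

text \<open>Tree patterns: e is encoded as a boolean function (True = 1, False = 0);
  only its values on [k] minus the root matter.\<close>
definition friendly :: "nat \<Rightarrow> nat tree \<Rightarrow> (nat \<Rightarrow> bool) \<Rightarrow> bool" where
  "friendly k P e \<longleftrightarrow>
     parent P k \<noteq> None \<and> cL P k \<noteq> None
   \<and> (\<forall>j \<in> BRm P (root P) - {root P}. \<not> e j)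
   \<and> (e k \<longrightarrow> \<not> e (the (cL P k)))"

text \<open>Permutations of [n] as lists (one-line notation); pi(j) = xs ! (j-1).\<close>
definition perms :: "nat \<Rightarrow> nat list set" where
  "perms n = {xs. length xs = n \<and> distinct xs \<and> set xs = {1..n}}"

definition pval :: "nat list \<Rightarrow> nat \<Rightarrow> nat" where
  "pval xs j = xs ! (j - 1)"

type_synonym mesh = "nat list \<times> (nat \<times> nat) set"

definition contains :: "nat list \<Rightarrow> mesh \<Rightarrow> bool" where
  "contains pi \<sigma> \<longleftrightarrow>
    (let tau = fst \<sigma>; C = snd \<sigma>; k = length tau; n = length pi in
     \<exists>\<nu> :: nat \<Rightarrow> nat.
       (\<forall>a \<in> {1..k}. 1 \<le> \<nu> a \<and> \<nu> a \<le> n)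
     \<and> (\<forall>a \<in> {1..k}. \<forall>b \<in> {1..k}. a < b \<longrightarrow> \<nu> a < \<nu> b)
     \<and> (\<forall>a \<in> {1..k}. \<forall>b \<in> {1..k}.
           pval pi (\<nu> a) < pval pi (\<nu> b) \<longleftrightarrow> pval tau a < pval tau b)
     \<and> (let lam = sort (map (\<lambda>a. pval pi (\<nu> a)) [1..<k+1]);
            nu' = (\<lambda>a. if a = 0 then 0 else if a = k + 1 then n + 1 else \<nu> a);
            lam' = (\<lambda>b. if b = 0 then 0 else if b = k + 1 then n + 1 else lam ! (b - 1))
        in \<forall>(a, b) \<in> C. \<not> (\<exists>j \<in> {1..n}. nu' a < j \<and> j < nu' (a + 1)
                                 \<and> lam' b < pval pi j \<and> pval pi j < lam' (b + 1))))"

definition avoiders :: "nat \<Rightarrow> mesh \<Rightarrow> nat list set" where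
  "avoiders n \<sigma> = {pi \<in> perms n. \<not> contains pi \<sigma>}"

definition cins :: "nat \<Rightarrow> nat list \<Rightarrow> nat list" where
  "cins j pi = take (j - 1) pi @ [Suc (length pi)] @ drop (j - 1) pi"

definition prem :: "nat list \<Rightarrow> nat list" where
  "prem pi = removeAll (length pi) pi"

fun zigzag :: "nat \<Rightarrow> nat list set \<Rightarrow> bool" where
  "zigzag 0 L \<longleftrightarrow> L = {[]}"
| "zigzag (Suc m) L \<longleftrightarrow> L \<subseteq> perms (Suc m) \<and> zigzag m (prem ` L)
     \<and> (\<forall>pi \<in> prem ` L. cins 1 pi \<in> L \<and> cins (Suc m) pi \<in> L)"

definition hereditary :: "(nat \<Rightarrow> nat list set) \<Rightarrow> bool" where
  "hereditary L \<longleftrightarrow> (\<forall>n \<ge> 1. L (n - 1) = prem ` L n)"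

definition tame :: "mesh \<Rightarrow> bool" where
  "tame \<sigma> \<longleftrightarrow> (\<forall>n. zigzag n (avoiders n \<sigma>)) \<and> hereditary (\<lambda>n. avoiders n \<sigma>)"

text \<open>rho = tau(P)^{-1}: 1-based position of j in the preorder word.\<close>
definition rho :: "nat tree \<Rightarrow> nat \<Rightarrow> nat" where
  "rho P j = Suc (LEAST i. i < length (preorder P) \<and> preorder P ! i = j)"

definition Cset :: "nat tree \<Rightarrow> nat \<Rightarrow> (nat \<times> nat) set" where
  "Cset P j = {(rho P j - 1, m) | m. m \<in> BRm P j}"

definition Cset' :: "nat tree \<Rightarrow> (nat \<Rightarrow> bool) \<Rightarrow> nat \<Rightarrow> (nat \<times> nat) set" where
  "Cset' P e j = (if e j then {(rho P j - 1, minP P j - 1), (rho P j - 1, maxP P j)} else {})"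

definition sigma :: "nat \<Rightarrow> nat tree \<Rightarrow> (nat \<Rightarrow> bool) \<Rightarrow> mesh" where
  "sigma k P e = (preorder P,
     (\<Union>j \<in> {1..k}. Cset P j) \<union> (\<Union>j \<in> {1..k} - {root P}. Cset' P e j))"

definition sigma_minus :: "nat \<Rightarrow> nat tree \<Rightarrow> (nat \<Rightarrow> bool) \<Rightarrow> mesh" where
  "sigma_minus k P e = (fst (sigma k P e), snd (sigma k P e) - {(rho P k - 1, k)})"

end

theory Submission
  imports Defs
begin

(* A mesh pattern (tau, C) with no shaded cell in the top row, whose maximum k is neither
   the first nor the last entry of tau, is tame.  Inserting a new maximum into pi cannot destroy
   an occurrence, because the new point lies in an unshaded top-row cell; hence removing the
   maximum preserves avoidance, which gives p(L_n) = L_(n-1).  Conversely an occurrence in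
   c_1(pi) or c_n(pi) cannot use the new maximum, which would have to play the maximum of tau at
   its first or last position; so c_1 and c_n preserve avoidance.
   For sigma^-(P,e) these conditions come from friendliness: k has a parent, so it is not the
   root, i.e. not first in preorder; k has a left child, which follows it in preorder; and a
   top-row cell (rho(j)-1, max P(j)) with j <> k requires k in P(j), so j lies on the right
   branch of the root, where e vanishes. *)

section \<open>Inserting a new maximum into a permutation\<close>

(* Position x of pi becomes position shift j x of cins j pi; unshift j inverts shift j off j. *)
definition shift :: "nat \<Rightarrow> nat \<Rightarrow> nat" where
  "shift j x = (if x < j then x else Suc x)"

definition unshift :: "nat \<Rightarrow> nat \<Rightarrow> nat" where
  "unshift j y = (if y < j then y else y - 1)"

lemma shift_less_shift_iff [simp]: "shift j x < shift j y \<longleftrightarrow> x < y"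
  by (auto simp: shift_def)

lemma unshift_shift [simp]: "unshift j (shift j x) = x"
  by (simp add: shift_def unshift_def)

lemma shift_unshift: "y \<noteq> j \<Longrightarrow> shift j (unshift j y) = y"
  by (auto simp: shift_def unshift_def)

lemma shift_neq [simp]: "shift j x \<noteq> j"
  by (simp add: shift_def)

lemma unshift_mem: "j \<in> {1..Suc n} \<Longrightarrow> y \<in> {1..Suc n} - {j} \<Longrightarrow> unshift j y \<in> {1..n}"
  by (auto simp: unshift_def)

lemma shift_mem: "x \<in> {1..n} \<Longrightarrow> shift j x \<in> {1..Suc n}"
  by (auto simp: shift_def)

lemma length_cins: "j \<le> Suc (length pi) \<Longrightarrow> length (cins j pi) = Suc (length pi)"
  by (simp add: cins_def)

lemma pval_cins_self: "j \<in> {1..Suc (length pi)} \<Longrightarrow> pval (cins j pi) j = Suc (length pi)"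
  by (simp add: pval_def cins_def nth_append min_def)

lemma pval_cins_unshift:
  assumes "j \<in> {1..Suc (length pi)}" "y \<in> {1..Suc (length pi)} - {j}"
  shows "pval (cins j pi) y = pval pi (unshift j y)"
  using assms by (auto simp: pval_def cins_def unshift_def nth_append min_def nth_Cons' Suc_diff_le numeral_2_eq_2)

lemma perms_pval:
  assumes "pi \<in> perms n" "x \<in> {1..n}"
  shows "pval pi x \<in> {1..n}"
  using assms nth_mem[of "x - 1" pi] by (auto simp: perms_def pval_def)

lemma cins_perms:
  assumes "pi \<in> perms n" "j \<in> {1..Suc n}"
  shows "cins j pi \<in> perms (Suc n)"
proof -
  have "Suc n \<notin> set pi" "distinct (take (j - 1) pi @ drop (j - 1) pi)"
    "set (take (j - 1) pi @ drop (j - 1) pi) = {1..n}"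
    using assms by (auto simp: perms_def)
  then show ?thesis
    using assms unfolding perms_def cins_def
    by (auto simp del: append_take_drop_id dest: in_set_takeD in_set_dropD)
qed

lemma prem_cins:
  assumes "pi \<in> perms n" "j \<le> Suc n"
  shows "prem (cins j pi) = pi"
proof -
  have "Suc n \<notin> set (take (j - 1) pi)" "Suc n \<notin> set (drop (j - 1) pi)"
    using assms by (auto simp: perms_def dest: in_set_takeD in_set_dropD)
  then show ?thesis
    using assms by (simp add: prem_def length_cins perms_def) (simp add: cins_def removeAll_id)
qed

lemma perms_Suc_eq_cins:
  assumes "pi \<in> perms (Suc n)"
  obtains j sigma where "j \<in> {1..Suc n}" "sigma \<in> perms n" "pi = cins j sigma"
proof -
  have "Suc n \<in> set pi" using assms by (simp add: perms_def)
  then obtain xs ys where pi: "pi = xs @ Suc n # ys" by (meson split_list)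
  have "xs @ ys \<in> perms n"
  proof -
    have "set (xs @ ys) = set pi - {Suc n}" "distinct (xs @ ys)" "length (xs @ ys) = n"
      using assms unfolding pi perms_def by auto
    then show ?thesis using assms unfolding perms_def by auto
  qed
  moreover have "pi = cins (Suc (length xs)) (xs @ ys)"
    using assms unfolding pi perms_def cins_def by simp
  moreover have "Suc (length xs) \<in> {1..Suc n}"
    using assms unfolding pi perms_def by simp
  ultimately show thesis using that by blast
qed

section \<open>Occurrences of a mesh pattern under insertion of the maximum\<close>

(* The grid lines nu' and lam' in the definition of contains. *)
definition pos_grid :: "nat \<Rightarrow> nat \<Rightarrow> (nat \<Rightarrow> nat) \<Rightarrow> nat \<Rightarrow> nat" where
  "pos_grid k n \<nu> a = (if a = 0 then 0 else if a = k + 1 then n + 1 else \<nu> a)"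

definition val_grid :: "nat \<Rightarrow> nat list \<Rightarrow> (nat \<Rightarrow> nat) \<Rightarrow> nat \<Rightarrow> nat" where
  "val_grid k pi \<nu> b =
     (if b = 0 then 0 else if b = k + 1 then length pi + 1
      else sort (map (\<lambda>a. pval pi (\<nu> a)) [1..<k+1]) ! (b - 1))"

definition in_cell :: "nat list \<Rightarrow> nat \<Rightarrow> (nat \<Rightarrow> nat) \<Rightarrow> nat \<Rightarrow> nat \<Rightarrow> nat \<Rightarrow> bool" where
  "in_cell pi k \<nu> a b x \<longleftrightarrow>
     pos_grid k (length pi) \<nu> a < x \<and> x < pos_grid k (length pi) \<nu> (a + 1)
   \<and> val_grid k pi \<nu> b < pval pi x \<and> pval pi x < val_grid k pi \<nu> (b + 1)"

definition occurs_at :: "nat list \<Rightarrow> nat list \<Rightarrow> (nat \<Rightarrow> nat) \<Rightarrow> bool" where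
  "occurs_at pi tau \<nu> \<longleftrightarrow>
     (\<forall>a \<in> {1..length tau}. 1 \<le> \<nu> a \<and> \<nu> a \<le> length pi)
   \<and> (\<forall>a \<in> {1..length tau}. \<forall>b \<in> {1..length tau}. a < b \<longrightarrow> \<nu> a < \<nu> b)
   \<and> (\<forall>a \<in> {1..length tau}. \<forall>b \<in> {1..length tau}.
         pval pi (\<nu> a) < pval pi (\<nu> b) \<longleftrightarrow> pval tau a < pval tau b)"

definition mesh_occurs_at :: "nat list \<Rightarrow> mesh \<Rightarrow> (nat \<Rightarrow> nat) \<Rightarrow> bool" where
  "mesh_occurs_at pi \<sigma> \<nu> \<longleftrightarrow> occurs_at pi (fst \<sigma>) \<nu>
     \<and> (\<forall>(a, b) \<in> snd \<sigma>. \<not> (\<exists>x \<in> {1..length pi}. in_cell pi (length (fst \<sigma>)) \<nu> a b x))"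

lemma contains_iff_mesh_occurs_at: "contains pi \<sigma> \<longleftrightarrow> (\<exists>\<nu>. mesh_occurs_at pi \<sigma> \<nu>)"
  unfolding contains_def mesh_occurs_at_def occurs_at_def in_cell_def pos_grid_def val_grid_def
  by (simp only: Let_def conj_assoc)

lemma bex_unshift_iff:
  assumes "j \<in> {1..Suc n}"
  shows "(\<exists>x \<in> {1..Suc n}. x \<noteq> j \<and> Q (unshift j x)) \<longleftrightarrow> (\<exists>y \<in> {1..n}. Q y)"
proof
  assume "\<exists>x \<in> {1..Suc n}. x \<noteq> j \<and> Q (unshift j x)"
  then show "\<exists>y \<in> {1..n}. Q y" using unshift_mem[OF assms] by blast
next
  assume "\<exists>y \<in> {1..n}. Q y"
  then obtain y where "y \<in> {1..n}" "Q y" by blast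
  then show "\<exists>x \<in> {1..Suc n}. x \<noteq> j \<and> Q (unshift j x)"
    using shift_mem[of y n j] by (intro bexI[of _ "shift j y"]) auto
qed

lemma pos_grid_cins:
  assumes "j \<in> {1..Suc n}" "\<forall>a \<in> {1..k}. \<mu> a \<noteq> j" "a \<le> Suc k"
  shows "pos_grid k (Suc n) \<mu> a = shift j (pos_grid k n (unshift j \<circ> \<mu>) a)"
proof -
  have "shift j 0 = 0" "shift j (Suc n) = Suc (Suc n)"
    using assms(1) by (auto simp: shift_def)
  then show ?thesis
    using assms by (auto simp: pos_grid_def shift_unshift)
qed

lemma val_grid_cins:
  assumes "j \<in> {1..Suc (length pi)}" "\<forall>a \<in> {1..k}. \<mu> a \<in> {1..Suc (length pi)} - {j}" "b \<le> k"
  shows "val_grid k (cins j pi) \<mu> b = val_grid k pi (unshift j \<circ> \<mu>) b"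
proof -
  have vals: "map (\<lambda>a. pval (cins j pi) (\<mu> a)) [1..<k+1] = map (\<lambda>a. pval pi (unshift j (\<mu> a))) [1..<k+1]"
    using assms by (intro map_cong) (auto simp: pval_cins_unshift)
  show ?thesis
    unfolding val_grid_def o_def vals using assms(3) by simp
qed

lemma val_grid_le:
  assumes "pi \<in> perms n" "\<forall>a \<in> {1..k}. \<nu> a \<in> {1..n}" "b < k"
  shows "val_grid k pi \<nu> (Suc b) \<le> n"
proof -
  let ?vals = "sort (map (\<lambda>a. pval pi (\<nu> a)) [1..<k+1])"
  have "?vals ! b \<in> set ?vals"
    using assms(3) by (intro nth_mem) simp
  also have "set ?vals = (\<lambda>a. pval pi (\<nu> a)) ` {1..k}"
    by (simp del: upt_Suc add: atLeastLessThanSuc_atLeastAtMost)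
  finally show ?thesis
    using assms perms_pval by (fastforce simp: val_grid_def)
qed

lemma in_cell_cins_iff:
  assumes pi: "pi \<in> perms n" and j: "j \<in> {1..Suc n}"
    and \<mu>: "\<forall>a \<in> {1..k}. \<mu> a \<in> {1..Suc n} - {j}"
    and "a \<le> k" "b < k" "x \<in> {1..Suc n}"
  shows "in_cell (cins j pi) k \<mu> a b x \<longleftrightarrow> x \<noteq> j \<and> in_cell pi k (unshift j \<circ> \<mu>) a b (unshift j x)"
proof -
  have n: "length pi = n" "length (cins j pi) = Suc n"
    using pi j by (auto simp: perms_def length_cins)
  have val: "val_grid k (cins j pi) \<mu> b' = val_grid k pi (unshift j \<circ> \<mu>) b'" if "b' \<le> k" for b'
    using val_grid_cins[of j pi k \<mu> b'] that j \<mu> n by simp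
  have pos: "pos_grid k (Suc n) \<mu> a' = shift j (pos_grid k n (unshift j \<circ> \<mu>) a')" if "a' \<le> Suc k" for a'
    using pos_grid_cins[of j n k \<mu> a'] that j \<mu> by simp
  show ?thesis
  proof (cases "x = j")
    case True
    have "val_grid k pi (unshift j \<circ> \<mu>) (Suc b) \<le> n"
      using val_grid_le[OF pi _ \<open>b < k\<close>] unshift_mem j \<mu> by auto
    then show ?thesis
      using True j n val[of "Suc b"] \<open>b < k\<close> pval_cins_self[of j pi] by (auto simp: in_cell_def)
  next
    case False
    then have x: "x = shift j (unshift j x)" by (simp add: shift_unshift)
    have "pos_grid k (Suc n) \<mu> a < x \<longleftrightarrow> pos_grid k n (unshift j \<circ> \<mu>) a < unshift j x"
      "x < pos_grid k (Suc n) \<mu> (a + 1) \<longleftrightarrow> unshift j x < pos_grid k n (unshift j \<circ> \<mu>) (a + 1)"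
      using pos \<open>a \<le> k\<close> by (subst x, simp)+
    moreover have "pval (cins j pi) x = pval pi (unshift j x)"
      using pval_cins_unshift False j n \<open>x \<in> {1..Suc n}\<close> by simp
    ultimately show ?thesis
      using False n val \<open>b < k\<close> by (simp add: in_cell_def)
  qed
qed

lemma occurs_at_cins_iff:
  assumes n: "length pi = n" and j: "j \<in> {1..Suc n}"
    and \<mu>: "\<forall>a \<in> {1..length tau}. \<mu> a \<in> {1..Suc n} - {j}"
  shows "occurs_at (cins j pi) tau \<mu> \<longleftrightarrow> occurs_at pi tau (unshift j \<circ> \<mu>)"
proof -
  have "\<mu> a < \<mu> b \<longleftrightarrow> unshift j (\<mu> a) < unshift j (\<mu> b)"
    if "a \<in> {1..length tau}" "b \<in> {1..length tau}" for a b
    using \<mu> that shift_less_shift_iff[of j "unshift j (\<mu> a)" "unshift j (\<mu> b)"]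
    by (simp add: shift_unshift)
  moreover have "pval (cins j pi) (\<mu> a) = pval pi (unshift j (\<mu> a))" if "a \<in> {1..length tau}" for a
    using \<mu> that n j pval_cins_unshift by simp
  moreover have "unshift j (\<mu> a) \<in> {1..n}" if "a \<in> {1..length tau}" for a
    using \<mu> that unshift_mem[OF j] by blast
  ultimately show ?thesis
    using \<mu> n j by (auto simp: occurs_at_def length_cins)
qed

lemma mesh_occurs_at_cins_iff:
  assumes pi: "pi \<in> perms n" and j: "j \<in> {1..Suc n}"
    and C: "\<forall>(a, b) \<in> C. a \<le> length tau \<and> b < length tau"
    and \<mu>: "\<forall>a \<in> {1..length tau}. \<mu> a \<in> {1..Suc n} - {j}"
  shows "mesh_occurs_at (cins j pi) (tau, C) \<mu> \<longleftrightarrow> mesh_occurs_at pi (tau, C) (unshift j \<circ> \<mu>)"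
proof -
  have n: "length pi = n" "length (cins j pi) = Suc n"
    using pi j by (auto simp: perms_def length_cins)
  have cells: "(\<exists>x \<in> {1..Suc n}. in_cell (cins j pi) (length tau) \<mu> a b x)
      \<longleftrightarrow> (\<exists>y \<in> {1..n}. in_cell pi (length tau) (unshift j \<circ> \<mu>) a b y)"
    if "(a, b) \<in> C" for a b
  proof -
    have "a \<le> length tau" "b < length tau"
      using C that by auto
    then have "(\<exists>x \<in> {1..Suc n}. in_cell (cins j pi) (length tau) \<mu> a b x)
      \<longleftrightarrow> (\<exists>x \<in> {1..Suc n}. x \<noteq> j \<and> in_cell pi (length tau) (unshift j \<circ> \<mu>) a b (unshift j x))"
      using in_cell_cins_iff[OF pi j \<mu>] by (intro bex_cong) simp_all
    then show ?thesis
      using bex_unshift_iff[OF j] by simp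
  qed
  show ?thesis
    unfolding mesh_occurs_at_def fst_conv snd_conv n occurs_at_cins_iff[OF n(1) j \<mu>]
    using cells by blast
qed

lemma contains_cins:
  assumes pi: "pi \<in> perms n" and j: "j \<in> {1..Suc n}"
    and C: "\<forall>(a, b) \<in> C. a \<le> length tau \<and> b < length tau"
    and "contains pi (tau, C)"
  shows "contains (cins j pi) (tau, C)"
proof -
  obtain \<nu> where \<nu>: "mesh_occurs_at pi (tau, C) \<nu>"
    using assms(4) contains_iff_mesh_occurs_at by blast
  then have "\<forall>a \<in> {1..length tau}. shift j (\<nu> a) \<in> {1..Suc n} - {j}"
    using pi shift_mem by (auto simp: mesh_occurs_at_def occurs_at_def perms_def)
  then have "mesh_occurs_at (cins j pi) (tau, C) (shift j \<circ> \<nu>)"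
    using mesh_occurs_at_cins_iff[OF pi j C, of "shift j \<circ> \<nu>"] \<nu> by (simp add: o_def)
  then show ?thesis
    using contains_iff_mesh_occurs_at by blast
qed

section \<open>A sufficient condition for tameness\<close>

lemma perms_pval_surj:
  assumes "tau \<in> perms k" "v \<in> {1..k}"
  obtains c where "c \<in> {1..k}" "pval tau c = v"
proof -
  have "v \<in> set tau"
    using assms by (simp add: perms_def)
  then obtain i where "i < length tau" "tau ! i = v"
    by (auto simp: in_set_conv_nth)
  then show thesis
    using assms that[of "Suc i"] by (simp add: perms_def pval_def)
qed

lemma perms_pval_eq_max:
  assumes tau: "tau \<in> perms k" and a: "a \<in> {1..k}"
    and dominant: "\<forall>b \<in> {1..k}. b \<noteq> a \<longrightarrow> pval tau b < pval tau a"
  shows "pval tau a = k"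
proof -
  obtain c where c: "c \<in> {1..k}" "pval tau c = k"
    using perms_pval_surj[OF tau, of k] a by auto
  moreover have "pval tau a \<le> k"
    using perms_pval[OF tau a] by simp
  ultimately show ?thesis
    using dominant by force
qed

lemma occurs_at_cins_new_max:
  assumes pi: "pi \<in> perms n" and tau: "tau \<in> perms k" and j: "j \<in> {1..Suc n}"
    and occ: "occurs_at (cins j pi) tau \<mu>" and a0: "a0 \<in> {1..k}" "\<mu> a0 = j"
  shows "pval tau a0 = k"
proof -
  have len: "length pi = n" "length tau = k" "length (cins j pi) = Suc n"
    using pi tau j by (auto simp: perms_def length_cins)
  have range: "\<forall>a \<in> {1..k}. \<mu> a \<in> {1..Suc n}"
    and mono: "\<forall>a \<in> {1..k}. \<forall>b \<in> {1..k}. a < b \<longrightarrow> \<mu> a < \<mu> b"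
    and iso: "\<forall>a \<in> {1..k}. \<forall>b \<in> {1..k}.
                pval (cins j pi) (\<mu> a) < pval (cins j pi) (\<mu> b) \<longleftrightarrow> pval tau a < pval tau b"
    using occ len by (auto simp: occurs_at_def)
  have "pval tau b < pval tau a0" if b: "b \<in> {1..k}" "b \<noteq> a0" for b
  proof -
    have "\<mu> b \<noteq> j"
      using mono a0 b by (metis nat_neq_iff)
    then have "pval (cins j pi) (\<mu> b) = pval pi (unshift j (\<mu> b))"
      using range b j len pval_cins_unshift by simp
    also have "\<dots> \<le> n"
      using perms_pval[OF pi] unshift_mem[OF j] range b \<open>\<mu> b \<noteq> j\<close> by fastforce
    also have "n < pval (cins j pi) (\<mu> a0)"
      using a0 j len pval_cins_self[of j pi] by simp
    finally show ?thesis
      using iso a0 b by blast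
  qed
  then show ?thesis
    using perms_pval_eq_max[OF tau a0(1)] by blast
qed

lemma occurs_at_cins_end_avoids_new_max:
  assumes pi: "pi \<in> perms n" and tau: "tau \<in> perms k"
    and j: "j = 1 \<or> j = Suc n"
    and max_not_first: "pval tau 1 \<noteq> k" and max_not_last: "pval tau k \<noteq> k"
    and occ: "occurs_at (cins j pi) tau \<mu>"
  shows "\<forall>a \<in> {1..k}. \<mu> a \<noteq> j"
proof (rule ccontr)
  assume "\<not> ?thesis"
  then obtain a0 where a0: "a0 \<in> {1..k}" "\<mu> a0 = j" by auto
  have j': "j \<in> {1..Suc n}"
    using j by auto
  have range: "\<forall>a \<in> {1..k}. \<mu> a \<in> {1..Suc n}"
    and mono: "\<forall>a \<in> {1..k}. \<forall>b \<in> {1..k}. a < b \<longrightarrow> \<mu> a < \<mu> b"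
    using occ pi tau j' by (auto simp: occurs_at_def perms_def length_cins)
  have "pval tau a0 = k"
    using occurs_at_cins_new_max[OF pi tau j' occ a0] .
  moreover have "a0 = 1" if "j = 1"
  proof (rule ccontr)
    assume "a0 \<noteq> 1"
    then have "\<mu> 1 < \<mu> a0"
      using mono a0 by auto
    moreover have "\<mu> 1 \<ge> 1"
      using range a0 by auto
    ultimately show False
      using a0 that by simp
  qed
  moreover have "a0 = k" if "j = Suc n"
  proof (rule ccontr)
    assume "a0 \<noteq> k"
    then have "\<mu> a0 < \<mu> k"
      using mono a0 by auto
    moreover have "\<mu> k \<le> Suc n"
      using range a0 by auto
    ultimately show False
      using a0 that by simp
  qed
  ultimately show False
    using j max_not_first max_not_last by auto
qed

lemma contains_of_cins_end:
  assumes pi: "pi \<in> perms n" and tau: "tau \<in> perms k"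
    and C: "\<forall>(a, b) \<in> C. a \<le> k \<and> b < k"
    and j: "j = 1 \<or> j = Suc n"
    and max_not_first: "pval tau 1 \<noteq> k" and max_not_last: "pval tau k \<noteq> k"
    and "contains (cins j pi) (tau, C)"
  shows "contains pi (tau, C)"
proof -
  have j': "j \<in> {1..Suc n}" and len: "length tau = k" "length (cins j pi) = Suc n"
    using j pi tau by (auto simp: perms_def length_cins)
  obtain \<mu> where \<mu>: "mesh_occurs_at (cins j pi) (tau, C) \<mu>"
    using assms(7) contains_iff_mesh_occurs_at by blast
  then have "\<forall>a \<in> {1..k}. \<mu> a \<noteq> j"
    using occurs_at_cins_end_avoids_new_max[OF pi tau j max_not_first max_not_last]
    by (simp add: mesh_occurs_at_def)
  moreover have "\<forall>a \<in> {1..k}. \<mu> a \<in> {1..Suc n}"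
    using \<mu> len by (simp add: mesh_occurs_at_def occurs_at_def)
  ultimately have "mesh_occurs_at pi (tau, C) (unshift j \<circ> \<mu>)"
    using mesh_occurs_at_cins_iff[OF pi j'] C \<mu> len by simp
  then show ?thesis
    using contains_iff_mesh_occurs_at by blast
qed

locale interior_max_mesh =
  fixes tau :: "nat list" and C :: "(nat \<times> nat) set" and k :: nat
  assumes tau_perm: "tau \<in> perms k" and k_pos: "1 \<le> k"
    and cells_below_top: "\<forall>(a, b) \<in> C. a \<le> k \<and> b < k"
    and max_not_first: "pval tau 1 \<noteq> k" and max_not_last: "pval tau k \<noteq> k"
begin

lemma length_tau: "length tau = k"
  using tau_perm by (simp add: perms_def)

lemma cins_end_in_avoiders:
  assumes "pi \<in> avoiders n (tau, C)" "j = 1 \<or> j = Suc n"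
  shows "cins j pi \<in> avoiders (Suc n) (tau, C)"
  using assms cins_perms[of pi n j] contains_of_cins_end[OF _ tau_perm cells_below_top]
    max_not_first max_not_last
  by (auto simp: avoiders_def)

lemma prem_avoiders: "prem ` avoiders (Suc n) (tau, C) = avoiders n (tau, C)"
proof
  show "prem ` avoiders (Suc n) (tau, C) \<subseteq> avoiders n (tau, C)"
  proof
    fix pi' assume "pi' \<in> prem ` avoiders (Suc n) (tau, C)"
    then obtain pi where pi: "pi \<in> avoiders (Suc n) (tau, C)" "pi' = prem pi" by blast
    then obtain j sigma where "j \<in> {1..Suc n}" "sigma \<in> perms n" "pi = cins j sigma"
      by (auto simp: avoiders_def elim: perms_Suc_eq_cins)
    then show "pi' \<in> avoiders n (tau, C)"
      using pi contains_cins[of sigma n j C tau] cells_below_top length_tau prem_cins[of sigma n j]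
      by (auto simp: avoiders_def)
  qed
next
  show "avoiders n (tau, C) \<subseteq> prem ` avoiders (Suc n) (tau, C)"
  proof
    fix sigma assume "sigma \<in> avoiders n (tau, C)"
    then have "cins (Suc n) sigma \<in> avoiders (Suc n) (tau, C)"
      and "prem (cins (Suc n) sigma) = sigma"
      using cins_end_in_avoiders prem_cins by (auto simp: avoiders_def)
    then show "sigma \<in> prem ` avoiders (Suc n) (tau, C)"
      by (metis image_eqI)
  qed
qed

lemma avoiders_0: "avoiders 0 (tau, C) = {[]}"
proof -
  have "\<not> occurs_at [] tau \<nu>" for \<nu>
    using k_pos length_tau by (force simp: occurs_at_def)
  then have "\<not> contains [] (tau, C)"
    by (simp add: contains_iff_mesh_occurs_at mesh_occurs_at_def)
  then show ?thesis
    by (auto simp: avoiders_def perms_def)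
qed

lemma zigzag_avoiders: "zigzag n (avoiders n (tau, C))"
proof (induction n)
  case 0
  then show ?case by (simp add: avoiders_0)
next
  case (Suc n)
  have "avoiders (Suc n) (tau, C) \<subseteq> perms (Suc n)"
    by (auto simp: avoiders_def)
  then show ?case
    using Suc.IH cins_end_in_avoiders by (simp add: prem_avoiders)
qed

theorem tame: "tame (tau, C)"
  unfolding tame_def hereditary_def
proof (intro conjI allI impI)
  fix n :: nat
  show "zigzag n (avoiders n (tau, C))"
    by (rule zigzag_avoiders)
  assume "n \<ge> 1"
  then show "avoiders (n - 1) (tau, C) = prem ` avoiders n (tau, C)"
    using prem_avoiders[of "n - 1"] by simp
qed

end

section \<open>The mesh pattern of a friendly tree pattern\<close>

lemma bst_distinct_preorder: "bst t \<Longrightarrow> distinct (preorder t)"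
  by (induction t) fastforce+

lemma set_subtree_at: "set_tree (subtree_at t i) \<subseteq> set_tree t"
  by (induction t) auto

lemma bst_subtree_at: "bst t \<Longrightarrow> bst (subtree_at t i)"
  by (induction t) auto

lemma subtree_at_eq_Node: "bst t \<Longrightarrow> i \<in> set_tree t \<Longrightarrow> \<exists>l r. subtree_at t i = Node l i r"
  by (induction t) auto

lemma parent_in_subtrees: "parent t i \<noteq> None \<Longrightarrow> i \<in> set_tree (lsub t) \<union> set_tree (rsub t)"
proof (induction t)
  case (Node l a r)
  then show ?case
    by (cases l; cases r) (auto split: if_splits)
qed simp

lemma preorder_first_neq_if_parent:
  assumes "bst t" "parent t i \<noteq> None"
  shows "pval (preorder t) 1 \<noteq> i"
  using assms parent_in_subtrees[OF assms(2)] by (cases t) (auto simp: pval_def)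

lemma preorder_last_neq_if_left_child:
  "bst t \<Longrightarrow> cL t i \<noteq> None \<Longrightarrow> last (preorder t) \<noteq> i"
proof (induction t)
  case (Node l a r)
  have nonempty: "t \<noteq> Leaf" if "cL t i \<noteq> None" for t
    using that by (auto simp: cL_def)
  consider "i = a" | "i < a" | "a < i" by linarith
  then show ?case
  proof cases
    case 1
    then have "preorder l @ preorder r \<noteq> []"
      using Node.prems by (auto simp: cL_def)
    then have "last (preorder (Node l a r)) \<in> set_tree l \<union> set_tree r"
      using last_in_set[of "preorder l @ preorder r"] by simp
    then show ?thesis
      using Node.prems 1 by auto
  next
    case 2
    then have "cL l i \<noteq> None"
      using Node.prems by (simp add: cL_def)
    show ?thesis
    proof (cases "r = Leaf")
      case True
      then show ?thesis
        using Node \<open>cL l i \<noteq> None\<close> nonempty[of l] by simp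
    next
      case False
      then have "last (preorder (Node l a r)) \<in> set_tree r"
        using last_in_set[of "preorder r"] by simp
      then show ?thesis
        using Node.prems 2 by auto
    qed
  next
    case 3
    then have "cL r i \<noteq> None"
      using Node.prems by (simp add: cL_def)
    then show ?thesis
      using Node nonempty[of r] by simp
  qed
qed (simp add: cL_def)

lemma butlast_rspine_less: "bst t \<Longrightarrow> x \<in> set (butlast (rspine t)) \<Longrightarrow> \<exists>y \<in> set_tree t. x < y"
proof (induction t)
  case (Node l a r)
  then show ?case
    by (cases r) (auto split: if_splits)
qed simp

lemma subtree_with_max_on_rspine:
  "bst t \<Longrightarrow> \<forall>x \<in> set_tree t. x \<le> m \<Longrightarrow> m \<in> set_tree (subtree_at t j) \<Longrightarrow> j < m
   \<Longrightarrow> j \<in> set (butlast (rspine t))"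
proof (induction t)
  case (Node l a r)
  consider "j = a" | "j < a" | "a < j" by linarith
  then show ?case
  proof cases
    case 1
    then have "r \<noteq> Leaf"
      using Node.prems by auto
    then show ?thesis
      using 1 by (cases r) auto
  next
    case 2
    then have "m \<in> set_tree l"
      using Node.prems(3) set_subtree_at[of l j] by auto
    then show ?thesis
      using Node.prems(1,2) by fastforce
  next
    case 3
    then show ?thesis
      using Node by (cases r) auto
  qed
qed simp

lemma rho_le_size:
  assumes "j \<in> set_tree P"
  shows "rho P j \<le> size P"
proof -
  obtain i where i: "i < length (preorder P)" "preorder P ! i = j"
    using assms by (metis in_set_conv_nth set_preorder)
  then have "(LEAST i. i < length (preorder P) \<and> preorder P ! i = j) < length (preorder P)"
    using LeastI[of "\<lambda>i. i < length (preorder P) \<and> preorder P ! i = j" i] by blast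
  then show ?thesis
    by (simp add: rho_def)
qed

lemma trees_bst: "P \<in> trees k \<Longrightarrow> bst P"
  by (simp add: trees_def bst_iff_sorted_wrt_less sorted_wrt_upt del: upt_Suc)

lemma set_tree_trees: "P \<in> trees k \<Longrightarrow> set_tree P = {1..k}"
  by (simp add: trees_def atLeastLessThanSuc_atLeastAtMost del: upt_Suc flip: set_inorder)

lemma size_trees: "P \<in> trees k \<Longrightarrow> size P = k"
  by (simp add: trees_def flip: length_inorder)

lemma preorder_trees_perms: "P \<in> trees k \<Longrightarrow> preorder P \<in> perms k"
  using bst_distinct_preorder[OF trees_bst] set_tree_trees size_trees by (simp add: perms_def)

lemma subtree_at_root: "t \<noteq> Leaf \<Longrightarrow> subtree_at t (root t) = t"
  by (cases t) (auto simp: root_def)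

lemma Cset_bounded:
  assumes P: "P \<in> trees k" and j: "j \<in> {1..k}" and ab: "(a, b) \<in> Cset P j"
  shows "a \<le> k \<and> b < k"
proof -
  have a: "a = rho P j - 1" and "b \<in> set (butlast (rspine (subtree_at P j)))"
    using ab by (auto simp: Cset_def BRm_def)
  then obtain y where "y \<in> set_tree (subtree_at P j)" "b < y"
    using butlast_rspine_less[OF bst_subtree_at[OF trees_bst[OF P]]] by blast
  then have "b < k"
    using set_subtree_at[of P j] set_tree_trees[OF P] by auto
  moreover have "a \<le> k"
    using a rho_le_size[of j P] j set_tree_trees[OF P] size_trees[OF P] by simp
  ultimately show ?thesis by simp
qed

lemma Cset'_bounded:
  assumes P: "P \<in> trees k" and friendly: "friendly k P e" and j: "j \<in> {1..k} - {root P}"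
    and ab: "(a, b) \<in> Cset' P e j" "(a, b) \<noteq> (rho P k - 1, k)"
  shows "a \<le> k \<and> b < k"
proof -
  have bst: "bst P" and setP: "set_tree P = {1..k}"
    using P trees_bst set_tree_trees by auto
  have "e j" and a: "a = rho P j - 1" and b: "b = minP P j - 1 \<or> b = maxP P j"
    using ab by (auto simp: Cset'_def split: if_splits)
  obtain l r where "subtree_at P j = Node l j r"
    using subtree_at_eq_Node[OF bst] j setP by blast
  then have nonempty: "set_tree (subtree_at P j) \<noteq> {}"
    by simp
  have min: "minP P j \<in> set_tree (subtree_at P j)" and max: "maxP P j \<in> set_tree (subtree_at P j)"
    unfolding minP_def maxP_def
    using Min_in[OF finite_set_tree nonempty] Max_in[OF finite_set_tree nonempty] by simp_all
  have "b < k"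
  proof (cases "b = maxP P j")
    case True
    show ?thesis
    proof (rule ccontr)
      assume "\<not> b < k"
      then have "b = k" and "j \<noteq> k"
        using True max set_subtree_at[of P j] setP ab(2) a by fastforce+
      then have "j \<in> set (butlast (rspine P))"
        using subtree_with_max_on_rspine[OF bst, of k j] True max setP j by auto
      moreover have "P \<noteq> Leaf"
        using j setP by auto
      ultimately have "j \<in> BRm P (root P) - {root P}"
        using j subtree_at_root[of P] by (simp add: BRm_def)
      then show False
        using friendly \<open>e j\<close> by (auto simp: friendly_def)
    qed
  next
    case False
    then have "b = minP P j - 1"
      using b by simp
    moreover have "minP P j \<in> {1..k}"
      using min set_subtree_at[of P j] setP by blast
    ultimately show ?thesis
      by auto
  qed
  moreover have "a \<le> k"
    using a rho_le_size[of j P] j setP size_trees[OF P] by simp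
  ultimately show ?thesis by simp
qed

lemma sigma_minus_cells_bounded:
  assumes "P \<in> trees k" "friendly k P e"
  shows "\<forall>(a, b) \<in> snd (sigma_minus k P e). a \<le> k \<and> b < k"
proof
  fix p assume "p \<in> snd (sigma_minus k P e)"
  then obtain a b where "p = (a, b)" "(a, b) \<noteq> (rho P k - 1, k)"
    "(a, b) \<in> (\<Union>j \<in> {1..k}. Cset P j) \<union> (\<Union>j \<in> {1..k} - {root P}. Cset' P e j)"
    by (cases p) (simp add: sigma_minus_def sigma_def)
  then show "case p of (a, b) \<Rightarrow> a \<le> k \<and> b < k"
    using Cset_bounded[OF assms(1)] Cset'_bounded[OF assms] by blast
qed

theorem lemma8:
  fixes k :: nat and P :: "nat tree" and e :: "nat \<Rightarrow> bool"
  assumes "P \<in> trees k"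
    and "friendly k P e"
  shows "tame (sigma_minus k P e)"
proof -
  have bst: "bst P" and perm: "preorder P \<in> perms k" and size: "size P = k"
    using assms(1) trees_bst preorder_trees_perms size_trees by auto
  have parent: "parent P k \<noteq> None" and left_child: "cL P k \<noteq> None"
    using assms(2) by (auto simp: friendly_def)
  then have "P \<noteq> Leaf"
    by auto
  then have k: "1 \<le> k"
    using size by (cases P) auto
  have "pval (preorder P) k = last (preorder P)"
    using \<open>P \<noteq> Leaf\<close> size by (simp add: pval_def last_conv_nth)
  then interpret interior_max_mesh "preorder P" "snd (sigma_minus k P e)" k
    using perm k sigma_minus_cells_bounded[OF assms] preorder_first_neq_if_parent[OF bst parent]
      preorder_last_neq_if_left_child[OF bst left_child]
    by unfold_locales auto
  have "sigma_minus k P e = (preorder P, snd (sigma_minus k P e))"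
    by (simp add: sigma_minus_def sigma_def)
  then show ?thesis
    using tame by simp
qed

end
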